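(* Let $s,r \ge 2$ and $q \ge 1$ be integers. If $R(s,q) \geq r$, then $Q(s,r) \leq q$.
   Context: The product dimension of a finite graph $G$ is the minimum possible number $d$ of proper vertex colorings of $G$ such that for every pair $u,v$ of distinct non-adjacent vertices there is at least one of the colorings in which $u$ and $v$ receive the same color. $K_s(r)$ denotes the graph consisting of $r$ pairwise vertex-disjoint copies of the complete graph $K_s$, and $Q(s,r)$ is the product dimension of $K_s(r)$. Let $Z_s$ be the ring of integers modulo $s$. For $A \subseteq Z_s$, a vector $v=(v_1,\dots,v_q)\in Z_s^q$ is $A$-covering if for every $a \in A$ there is $1 \le i \le q$ with $v_i = a$. A family $\mathcal{F} \subseteq Z_s^q$ is $A$-covering if for every ordered pair of distinct vectors $u,v \in \mathcal{F}$ the difference $u-v$ is $A$-covering; it is covering if it is $Z_s$-covering. $R(s,q)$ denotes the maximum possible cardinality of a covering family in $Z_s^q$. *)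

theory Defs
  imports Main
begin

definition proper_coloring :: "'v set \<Rightarrow> ('v \<Rightarrow> 'v \<Rightarrow> bool) \<Rightarrow> ('v \<Rightarrow> nat) \<Rightarrow> bool" where
  "proper_coloring V E c \<longleftrightarrow> (\<forall>u\<in>V. \<forall>v\<in>V. E u v \<longrightarrow> c u \<noteq> c v)"

definition product_dim :: "'v set \<Rightarrow> ('v \<Rightarrow> 'v \<Rightarrow> bool) \<Rightarrow> nat" where
  "product_dim V E = (LEAST d. \<exists>cs :: nat \<Rightarrow> 'v \<Rightarrow> nat.
      (\<forall>i<d. proper_coloring V E (cs i)) \<and>
      (\<forall>u\<in>V. \<forall>v\<in>V. u \<noteq> v \<and> \<not> E u v \<longrightarrow> (\<exists>i<d. cs i u = cs i v)))"

text \<open>K_s(r): r disjoint copies of K_s; vertex (k, j) is vertex j of copy k.\<close>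

definition Ks_vertices :: "nat \<Rightarrow> nat \<Rightarrow> (nat \<times> nat) set" where
  "Ks_vertices s r = {0..<r} \<times> {0..<s}"

definition Ks_edge :: "nat \<times> nat \<Rightarrow> nat \<times> nat \<Rightarrow> bool" where
  "Ks_edge x y \<longleftrightarrow> fst x = fst y \<and> snd x \<noteq> snd y"

definition Q :: "nat \<Rightarrow> nat \<Rightarrow> nat" where
  "Q s r = product_dim (Ks_vertices s r) Ks_edge"

text \<open>Vectors of Z_s^q are represented as lists of length q with entries in {0..<s}.\<close>

definition Zvecs :: "nat \<Rightarrow> nat \<Rightarrow> nat list set" where
  "Zvecs s q = {v. length v = q \<and> (\<forall>x\<in>set v. x < s)}"

definition diff_covering :: "nat \<Rightarrow> nat list \<Rightarrow> nat list \<Rightarrow> bool" where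
  "diff_covering s u v \<longleftrightarrow>
     (\<forall>a<s. \<exists>i<length u. (int (u ! i) - int (v ! i)) mod int s = int a)"

definition covering_family :: "nat \<Rightarrow> nat \<Rightarrow> nat list set \<Rightarrow> bool" where
  "covering_family s q F \<longleftrightarrow> F \<subseteq> Zvecs s q \<and>
     (\<forall>u\<in>F. \<forall>v\<in>F. u \<noteq> v \<longrightarrow> diff_covering s u v)"

definition R :: "nat \<Rightarrow> nat \<Rightarrow> nat" where
  "R s q = Max {card F | F. covering_family s q F}"

end

theory Submission
  imports Defs
begin

text \<open>Take r vectors h 0, ..., h (r-1) of a covering family in Z_s^q and colour vertex j of
  the k-th copy of K_s, in the i-th colouring, by (h k)_i + j mod s. Within a copy the colours
  are distinct shifts of one residue, so each colouring is proper. Vertices (k, j) and (k', j')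
  of different copies share a colour in the i-th colouring exactly when
  (h k)_i - (h k')_i = j' - j mod s, and such an i exists because h k - h k' is covering.\<close>

lemma finite_Zvecs: "finite (Zvecs s q)"
proof -
  have "Zvecs s q = {xs. set xs \<subseteq> {0..<s} \<and> length xs = q}"
    unfolding Zvecs_def by auto
  then show ?thesis
    using finite_lists_length_eq[of "{0..<s}" q] by simp
qed

lemma covering_family_finite: "covering_family s q F \<Longrightarrow> finite F"
  using finite_Zvecs finite_subset unfolding covering_family_def by blast

lemma covering_family_subset:
  "covering_family s q F \<Longrightarrow> G \<subseteq> F \<Longrightarrow> covering_family s q G"
  unfolding covering_family_def by blast

lemma R_attained: "\<exists>F. covering_family s q F \<and> card F = R s q"
proof -
  let ?S = "{card F | F. covering_family s q F}"
  have "?S \<subseteq> {0..card (Zvecs s q)}"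
    using finite_Zvecs by (auto simp: covering_family_def card_mono)
  then have "finite ?S"
    by (rule finite_subset) simp
  moreover have "covering_family s q {}"
    by (simp add: covering_family_def)
  then have "?S \<noteq> {}"
    by blast
  ultimately have "R s q \<in> ?S"
    unfolding R_def by (rule Max_in)
  then show ?thesis
    by auto
qed

lemma covering_family_of_card:
  assumes "r \<le> R s q"
  obtains F where "covering_family s q F" "card F = r"
proof -
  obtain F where F: "covering_family s q F" "card F = R s q"
    using R_attained by blast
  then obtain G where "G \<subseteq> F" "card G = r"
    using assms obtain_subset_with_card_n by metis
  then show thesis
    using that F covering_family_subset by blast
qed

lemma product_dim_le:
  assumes "\<forall>i<d. proper_coloring V E (cs i)"
    and "\<forall>u\<in>V. \<forall>v\<in>V. u \<noteq> v \<and> \<not> E u v \<longrightarrow> (\<exists>i<d. cs i u = cs i v)"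
  shows "product_dim V E \<le> d"
  unfolding product_dim_def by (rule Least_le) (use assms in blast)

lemma mod_add_eq_mod_add_iff:
  fixes a b j j' s :: nat
  shows "(a + j) mod s = (b + j') mod s \<longleftrightarrow> (int a - int b) mod int s = (int j' - int j) mod int s"
proof -
  have "(a + j) mod s = (b + j') mod s \<longleftrightarrow> (int a + int j) mod int s = (int b + int j') mod int s"
    by (metis of_nat_add of_nat_eq_iff zmod_int)
  also have "\<dots> \<longleftrightarrow> int s dvd (int a - int b) - (int j' - int j)"
    by (simp add: mod_eq_dvd_iff algebra_simps)
  also have "\<dots> \<longleftrightarrow> (int a - int b) mod int s = (int j' - int j) mod int s"
    by (simp add: mod_eq_dvd_iff)
  finally show ?thesis .
qed

definition shift_coloring :: "nat \<Rightarrow> (nat \<Rightarrow> nat list) \<Rightarrow> nat \<Rightarrow> nat \<times> nat \<Rightarrow> nat" where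
  "shift_coloring s h i x = (h (fst x) ! i + snd x) mod s"

lemma shift_coloring_proper: "proper_coloring (Ks_vertices s r) Ks_edge (shift_coloring s h i)"
  unfolding proper_coloring_def
proof (intro ballI impI)
  fix u v
  assume "u \<in> Ks_vertices s r" "v \<in> Ks_vertices s r" "Ks_edge u v"
  then obtain k j j' where uv: "u = (k, j)" "v = (k, j')" and j: "j < s" "j' < s" "j \<noteq> j'"
    by (cases u, cases v) (auto simp: Ks_vertices_def Ks_edge_def)
  have "0 < \<bar>int j' - int j\<bar>" "\<bar>int j' - int j\<bar> < int s"
    using j by auto
  then have "\<not> int s dvd \<bar>int j' - int j\<bar>"
    by (rule zdvd_not_zless)
  then show "shift_coloring s h i u \<noteq> shift_coloring s h i v"
    unfolding uv shift_coloring_def mod_add_eq_mod_add_iff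
    by (simp add: mod_eq_0_iff_dvd)
qed

lemma shift_coloring_covers:
  assumes F: "covering_family s q F" and h: "inj_on h {0..<r}" "h ` {0..<r} \<subseteq> F"
    and uv: "u \<in> Ks_vertices s r" "v \<in> Ks_vertices s r" "u \<noteq> v" "\<not> Ks_edge u v"
  shows "\<exists>i<q. shift_coloring s h i u = shift_coloring s h i v"
proof -
  obtain k j k' j' where kj: "u = (k, j)" "v = (k', j')" "k < r" "k' < r" "k \<noteq> k'"
    using uv by (cases u, cases v) (auto simp: Ks_vertices_def Ks_edge_def)
  then have "h k \<in> F" "h k' \<in> F" "h k \<noteq> h k'"
    using h by (auto simp: inj_on_def)
  then have cov: "diff_covering s (h k) (h k')" and len: "length (h k) = q"
    using F by (auto simp: covering_family_def Zvecs_def)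
  have "s > 0"
    using uv(1) kj(1) by (auto simp: Ks_vertices_def)
  define a where "a = nat ((int j' - int j) mod int s)"
  have a: "int a = (int j' - int j) mod int s" "a < s"
    unfolding a_def using \<open>s > 0\<close> by (simp_all add: nat_less_iff)
  then obtain i where "i < q" "(int (h k ! i) - int (h k' ! i)) mod int s = int a"
    using cov len unfolding diff_covering_def by blast
  then show ?thesis
    using a kj by (auto simp: shift_coloring_def mod_add_eq_mod_add_iff)
qed

theorem proposition1p2:
  fixes s r q :: nat
  assumes "s \<ge> 2" and "r \<ge> 2" and "q \<ge> 1"
    and "R s q \<ge> r"
  shows "Q s r \<le> q"
proof -
  obtain F where F: "covering_family s q F" "card F = r"
    using covering_family_of_card assms(4) by blast
  then obtain h where h: "bij_betw h {0..<r} F"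
    using ex_bij_betw_nat_finite covering_family_finite by metis
  show ?thesis
    unfolding Q_def
  proof (rule product_dim_le)
    show "\<forall>i<q. proper_coloring (Ks_vertices s r) Ks_edge (shift_coloring s h i)"
      by (simp add: shift_coloring_proper)
    show "\<forall>u\<in>Ks_vertices s r. \<forall>v\<in>Ks_vertices s r. u \<noteq> v \<and> \<not> Ks_edge u v
        \<longrightarrow> (\<exists>i<q. shift_coloring s h i u = shift_coloring s h i v)"
      using shift_coloring_covers[OF F(1)] h unfolding bij_betw_def by blast
  qed
qed

end
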